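(* Let $k:\mathcal{Z}\times\mathcal{Z}\to\mathbb{R}$ be a positive definite kernel with polynomial eigendecay on a $d$-dimensional hypercube $\mathcal{Z}$ of side length $\rho_{\mathcal{Z}}$, and let $\lambda>0$. Then the maximum information gain satisfies $$\Gamma_{k,\lambda}(T)=\mathcal{O}\!\left(T^{\frac1{\tilde p}}(\log T)^{1-\frac1{\tilde p}}\rho_{\mathcal{Z}}^{\frac{\alpha}{\tilde p}}\right),$$ with hidden constants depending on the kernel constants and $\lambda$ but not on $T$ or $\rho_{\mathcal{Z}}$.
   Context: $k$ is continuous with $k(z,z)\le1$. Let $\{(\sigma_m,\phi_m)\}_{m\ge1}$ be the Mercer eigenvalue–eigenfunction pairs of $k$ on $\mathcal{Z}$ with respect to Lebesgue measure, eigenvalues decreasing, so that $k(z,z')=\sum_m\sigma_m\phi_m(z)\phi_m(z')$. Polynomial eigendecay means: there are $C_p,\alpha>0$ and $p>1$ with $\sigma_m\le C_pm^{-p}\rho_{\mathcal{Z}}^{\alpha}$ for all $m\in\mathbb{N}$, and there is $\eta\ge0$ such that $m^{-p\eta}\phi_m(z)$ is uniformly bounded over all $m$ and $z$. Write $\tilde p=p(1-2\eta)$. The maximum information gain is $\Gamma_{k,\lambda}(t)=\max_{Z^t\subset\mathcal{Z},|Z^t|=t}\frac12\log\det(I+\lambda^{-2}K_{Z^t})$, where $K_{Z^t}=[k(z,z')]_{z,z'\in Z^t}$. *)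

theory Defs
  imports "HOL-Analysis.Analysis" "Jordan_Normal_Form.Determinant"
begin

definition hypercube :: "'a::euclidean_space \<Rightarrow> real \<Rightarrow> 'a set" where
  "hypercube a \<rho> = cbox a (a + \<rho> *\<^sub>R One)"

definition pd_kernel_on :: "'a set \<Rightarrow> ('a \<Rightarrow> 'a \<Rightarrow> real) \<Rightarrow> bool" where
  "pd_kernel_on Z k \<longleftrightarrow>
     (\<forall>z\<in>Z. \<forall>z'\<in>Z. k z z' = k z' z) \<and>
     (\<forall>zs c. set zs \<subseteq> Z \<longrightarrow>
        (\<Sum>i<length zs. \<Sum>j<length zs. c i * c j * k (zs ! i) (zs ! j)) \<ge> 0)"

definition mercer_pairs ::
  "'a::euclidean_space set \<Rightarrow> ('a \<Rightarrow> 'a \<Rightarrow> real) \<Rightarrow> (nat \<Rightarrow> real) \<Rightarrow> (nat \<Rightarrow> 'a \<Rightarrow> real) \<Rightarrow> bool" where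
  "mercer_pairs Z k \<sigma> \<phi> \<longleftrightarrow>
     (\<forall>m\<ge>1. 0 \<le> \<sigma> m) \<and>
     (\<forall>m n. 1 \<le> m \<longrightarrow> m \<le> n \<longrightarrow> \<sigma> n \<le> \<sigma> m) \<and>
     (\<forall>m\<ge>1. \<forall>n\<ge>1. (\<lambda>z. \<phi> m z * \<phi> n z) integrable_on Z \<and>
        integral Z (\<lambda>z. \<phi> m z * \<phi> n z) = (if m = n then 1 else 0)) \<and>
     (\<forall>m\<ge>1. \<forall>z\<in>Z. (\<lambda>z'. k z z' * \<phi> m z') integrable_on Z \<and>
        integral Z (\<lambda>z'. k z z' * \<phi> m z') = \<sigma> m * \<phi> m z) \<and>
     (\<forall>z\<in>Z. \<forall>z'\<in>Z. ((\<lambda>m. \<sigma> m * \<phi> m z * \<phi> m z') has_sum k z z') {1..})"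

definition gram_mat :: "('a \<Rightarrow> 'a \<Rightarrow> real) \<Rightarrow> 'a list \<Rightarrow> real mat" where
  "gram_mat k zs = mat (length zs) (length zs) (\<lambda>(i,j). k (zs ! i) (zs ! j))"

text \<open>Maximum information gain: maximum over subsets Z^t of Z with |Z^t| = t
  (represented by distinct lists of length t) of 1/2 log det(I + lambda^-2 K).\<close>
definition max_info_gain ::
  "'a set \<Rightarrow> ('a \<Rightarrow> 'a \<Rightarrow> real) \<Rightarrow> real \<Rightarrow> nat \<Rightarrow> real" where
  "max_info_gain Z k lam t =
     (SUP zs \<in> {zs. set zs \<subseteq> Z \<and> distinct zs \<and> length zs = t}.
        ln (Determinant.det (1\<^sub>m t + (1 / lam\<^sup>2) \<cdot>\<^sub>m gram_mat k zs)) / 2)"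

end

theory Submission
  imports Defs
begin

(* Truncating the Mercer expansion, I + K/lam^2 on T points is the limit of the matrices
   I + sum_{m<=N} (sigma_m/lam^2) g_m g_m^T with g_m = (phi_m(z_i))_i.  By the matrix
   determinant lemma each rank-one term multiplies the determinant by at most 1 + a_m, where
   a_m = sigma_m |g_m|^2/lam^2, so log det(I + K/lam^2) <= sum_m log(1 + a_m).  Since
   sigma_m phi_m(z)^2 <= k(z,z) <= 1 we have a_m <= T/lam^2, and the eigendecay gives
   a_m <= B T m^(-p~)/lam^2 with B = Cp Cphi^2 rho^alpha.  Bounding the first D terms by
   log(1 + T/lam^2) = O(log T) and the tail by sum_{m>D} a_m = O(T D^(1-p~)), the choice
   D ~ (B T/log T)^(1/p~) gives O((B T)^(1/p~) (log T)^(1-1/p~)). *)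

lemma mat_inverse_of_det_nonzero:
  fixes M :: "real mat"
  assumes "M \<in> carrier_mat n n" and "det M \<noteq> 0"
  obtains Mi where "Mi \<in> carrier_mat n n" "M * Mi = 1\<^sub>m n" "Mi * M = 1\<^sub>m n"
  using det_non_zero_imp_unit[OF assms, of undefined] that
  unfolding Units_def ring_mat_def by auto

lemma quadratic_form_bounds_of_psd_solution:
  fixes p :: "nat \<Rightarrow> nat \<Rightarrow> real"
  assumes psd: "\<And>x. 0 \<le> (\<Sum>i<n. \<Sum>j<n. x i * p i j * x j)"
    and u: "\<And>i. i < n \<Longrightarrow> u i = w i + (\<Sum>j<n. p i j * w j)"
  shows "0 \<le> (\<Sum>i<n. u i * w i)" and "(\<Sum>i<n. u i * w i) \<le> (\<Sum>i<n. (u i)\<^sup>2)"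
proof -
  define r where "r i = (\<Sum>j<n. p i j * w j)" for i
  have wr: "0 \<le> (\<Sum>i<n. w i * r i)"
    using psd[of w] unfolding r_def by (simp add: sum_distrib_left mult_ac)
  have "(\<Sum>i<n. u i * w i) = (\<Sum>i<n. (w i)\<^sup>2) + (\<Sum>i<n. w i * r i)"
    using u unfolding r_def by (simp add: sum.distrib[symmetric] power2_eq_square algebra_simps)
  then show "0 \<le> (\<Sum>i<n. u i * w i)" using wr by (simp add: sum_nonneg)
  have "(\<Sum>i<n. (u i)\<^sup>2) - (\<Sum>i<n. u i * w i) = (\<Sum>i<n. w i * r i) + (\<Sum>i<n. (r i)\<^sup>2)"
    using u unfolding r_def
    by (simp add: sum.distrib[symmetric] sum_subtractf[symmetric] power2_eq_square algebra_simps)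
  moreover have "0 \<le> (\<Sum>i<n. (r i)\<^sup>2)" by (simp add: sum_nonneg)
  ultimately show "(\<Sum>i<n. u i * w i) \<le> (\<Sum>i<n. (u i)\<^sup>2)" using wr by linarith
qed

(* Factor the bordered matrix [M, -U; V, 1] by eliminating either off-diagonal block. *)
lemma det_add_rank_one:
  fixes M Mi U V :: "real mat"
  assumes M: "M \<in> carrier_mat n n" and Mi: "Mi \<in> carrier_mat n n" and MiM: "Mi * M = 1\<^sub>m n"
    and U: "U \<in> carrier_mat n 1" and V: "V \<in> carrier_mat 1 n"
  shows "det (M + U * V) = det M * (1 + (V * Mi * U) $$ (0, 0))"
proof -
  let ?S = "1\<^sub>m 1 + V * Mi * U"
  have S: "?S \<in> carrier_mat 1 1" using U V Mi by auto
  have MUV: "M + U * V \<in> carrier_mat n n" using M U V by auto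
  have VMi: "V * Mi \<in> carrier_mat 1 n" using V Mi by auto
  have mU: "- U \<in> carrier_mat n 1" using U by auto
  let ?N = "four_block_mat M (- U) V (1\<^sub>m 1)"
  have lower_upper: "?N = four_block_mat (1\<^sub>m n) (- U) (0\<^sub>m 1 n) (1\<^sub>m 1)
      * four_block_mat (M + U * V) (0\<^sub>m n 1) V (1\<^sub>m 1)"
  proof (subst mult_four_block_mat[OF one_carrier_mat mU zero_carrier_mat one_carrier_mat
        MUV zero_carrier_mat V one_carrier_mat], rule cong_four_block_mat)
    show "M = 1\<^sub>m n * (M + U * V) + - U * V"
      using M U V by (intro eq_matI) (auto simp: scalar_prod_def)
  qed (use M U V in auto)
  have upper_lower: "?N = four_block_mat (1\<^sub>m n) (0\<^sub>m n 1) (V * Mi) (1\<^sub>m 1)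
      * four_block_mat M (- U) (0\<^sub>m 1 n) ?S"
  proof (subst mult_four_block_mat[OF one_carrier_mat zero_carrier_mat VMi one_carrier_mat
        M mU zero_carrier_mat S], rule cong_four_block_mat)
    have "V * Mi * M = V" using V Mi M MiM by (simp add: assoc_mult_mat[OF V Mi M])
    then show "V = V * Mi * M + 1\<^sub>m 1 * 0\<^sub>m 1 n" using V by simp
    show "1\<^sub>m 1 = V * Mi * - U + 1\<^sub>m 1 * ?S"
      using V Mi U by (intro eq_matI) (auto simp: scalar_prod_def)
  qed (use M U V in auto)
  have "det ?N = det (M + U * V)"
    unfolding lower_upper
      det_mult[OF four_block_carrier_mat[OF one_carrier_mat one_carrier_mat]
        four_block_carrier_mat[OF MUV one_carrier_mat]]
      det_four_block_mat_lower_left_zero[OF one_carrier_mat mU refl one_carrier_mat]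
      det_four_block_mat_upper_right_zero[OF MUV refl V one_carrier_mat]
    by simp
  moreover have "det ?N = det M * det ?S"
    unfolding upper_lower
      det_mult[OF four_block_carrier_mat[OF one_carrier_mat one_carrier_mat]
        four_block_carrier_mat[OF M S]]
      det_four_block_mat_lower_left_zero[OF M mU refl S]
      det_four_block_mat_upper_right_zero[OF one_carrier_mat refl VMi one_carrier_mat]
    by simp
  moreover have "det ?S = 1 + (V * Mi * U) $$ (0, 0)"
    using det_single[OF S] V Mi U by simp
  ultimately show ?thesis by simp
qed

(* With w = M^-1 u the update multiplies det M by 1 + c u.w, and u = w + P w with P psd
   gives 0 <= u.w <= |u|^2. *)
lemma det_one_plus_rank_one_update_bounds:
  fixes p :: "nat \<Rightarrow> nat \<Rightarrow> real" and u :: "nat \<Rightarrow> real"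
  assumes psd: "\<And>x. 0 \<le> (\<Sum>i<n. \<Sum>j<n. x i * p i j * x j)" and c: "0 \<le> c"
    and pos: "0 < det (1\<^sub>m n + mat n n (\<lambda>(i, j). p i j))"
  shows "det (1\<^sub>m n + mat n n (\<lambda>(i, j). p i j))
      \<le> det (1\<^sub>m n + mat n n (\<lambda>(i, j). p i j + c * u i * u j))"
    and "det (1\<^sub>m n + mat n n (\<lambda>(i, j). p i j + c * u i * u j))
      \<le> det (1\<^sub>m n + mat n n (\<lambda>(i, j). p i j)) * (1 + c * (\<Sum>i<n. (u i)\<^sup>2))"
proof -
  define M where "M = 1\<^sub>m n + mat n n (\<lambda>(i, j). p i j)"
  have M: "M \<in> carrier_mat n n" unfolding M_def by simp
  obtain Mi where Mi: "Mi \<in> carrier_mat n n" and MMi: "M * Mi = 1\<^sub>m n" and MiM: "Mi * M = 1\<^sub>m n"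
    using mat_inverse_of_det_nonzero[OF M] pos unfolding M_def by force
  define U where "U = mat n 1 (\<lambda>(i, _). c * u i)"
  define V where "V = mat 1 n (\<lambda>(_, j). u j)"
  have U: "U \<in> carrier_mat n 1" and V: "V \<in> carrier_mat 1 n" unfolding U_def V_def by auto
  define w where "w i = (\<Sum>j<n. Mi $$ (i, j) * u j)" for i
  have uw: "u i = w i + (\<Sum>j<n. p i j * w j)" if i: "i < n" for i
  proof -
    have "Mi *\<^sub>v vec n u = vec n w" unfolding w_def using Mi
      by (intro eq_vecI) (auto simp: scalar_prod_def atLeast0LessThan)
    then have "M *\<^sub>v vec n w = (M * Mi) *\<^sub>v vec n u"
      using M Mi by simp
    also have "\<dots> = vec n u" using MMi by simp
    finally have "M *\<^sub>v vec n w = vec n u" .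
    then have "u i = vec_index (M *\<^sub>v vec n w) i" using i by simp
    also have "\<dots> = w i + (\<Sum>j<n. p i j * w j)"
      using i unfolding M_def
      by (auto simp: scalar_prod_def atLeast0LessThan sum.distrib distrib_right
          if_distrib[where f = "\<lambda>x. x * _"] cong: if_cong)
    finally show ?thesis .
  qed
  have "(V * Mi * U) $$ (0, 0) = c * (\<Sum>i<n. u i * w i)"
    using Mi unfolding U_def V_def w_def
    by (simp add: scalar_prod_def atLeast0LessThan sum_distrib_left sum_distrib_right mult_ac)
      (subst sum.swap, simp add: mult_ac)
  moreover have "M + U * V = 1\<^sub>m n + mat n n (\<lambda>(i, j). p i j + c * u i * u j)"
    unfolding M_def U_def V_def by (intro eq_matI) (auto simp: scalar_prod_def)
  ultimately have det_update: "det (1\<^sub>m n + mat n n (\<lambda>(i, j). p i j + c * u i * u j))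
      = det M * (1 + c * (\<Sum>i<n. u i * w i))"
    using det_add_rank_one[OF M Mi MiM U V] by simp
  have detM: "0 \<le> det M" using pos unfolding M_def by simp
  note uw_bounds = quadratic_form_bounds_of_psd_solution[OF psd uw]
  have "det M * 1 \<le> det M * (1 + c * (\<Sum>i<n. u i * w i))"
    using detM c uw_bounds(1) by (intro mult_left_mono) auto
  then show "det M \<le> det (1\<^sub>m n + mat n n (\<lambda>(i, j). p i j + c * u i * u j))"
    unfolding det_update by simp
  show "det (1\<^sub>m n + mat n n (\<lambda>(i, j). p i j + c * u i * u j))
      \<le> det M * (1 + c * (\<Sum>i<n. (u i)\<^sup>2))"
    unfolding det_update
    using detM c uw_bounds(2) by (intro mult_left_mono add_left_mono) auto
qed

lemma quadratic_form_sum_rank_one_nonneg: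
  fixes g :: "nat \<Rightarrow> nat \<Rightarrow> real" and c :: "nat \<Rightarrow> real"
  assumes "\<And>m. m \<in> F \<Longrightarrow> 0 \<le> c m"
  shows "0 \<le> (\<Sum>i<n. \<Sum>j<n. x i * (\<Sum>m\<in>F. c m * g m i * g m j) * x j)"
proof -
  have "(\<Sum>i<n. \<Sum>j<n. x i * (\<Sum>m\<in>F. c m * g m i * g m j) * x j)
      = (\<Sum>m\<in>F. c m * (\<Sum>i<n. x i * g m i)\<^sup>2)"
    by (simp add: power2_eq_square sum_product sum_distrib_left sum_distrib_right mult_ac)
      (subst sum.swap, rule sum.cong[OF refl], subst sum.swap, simp add: mult_ac)
  also have "\<dots> \<ge> 0" using assms by (intro sum_nonneg) auto
  finally show ?thesis .
qed

lemma det_one_plus_sum_rank_one_bounds: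
  fixes g :: "nat \<Rightarrow> nat \<Rightarrow> real" and c :: "nat \<Rightarrow> real"
  assumes "finite S" and "\<And>m. m \<in> S \<Longrightarrow> 0 \<le> c m"
  shows "1 \<le> det (1\<^sub>m n + mat n n (\<lambda>(i, j). \<Sum>m\<in>S. c m * g m i * g m j))
    \<and> det (1\<^sub>m n + mat n n (\<lambda>(i, j). \<Sum>m\<in>S. c m * g m i * g m j))
      \<le> (\<Prod>m\<in>S. 1 + c m * (\<Sum>i<n. (g m i)\<^sup>2))"
  using assms
proof (induction S rule: finite_induct)
  case empty
  then show ?case by (simp add: zero_mat_def[symmetric])
next
  case (insert a F)
  define p where "p i j = (\<Sum>m\<in>F. c m * g m i * g m j)" for i j
  have det_insert: "det (1\<^sub>m n + mat n n (\<lambda>(i, j). \<Sum>m\<in>insert a F. c m * g m i * g m j))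
      = det (1\<^sub>m n + mat n n (\<lambda>(i, j). p i j + c a * g a i * g a j))"
    using insert.hyps unfolding p_def by (simp add: add.commute)
  have psd: "0 \<le> (\<Sum>i<n. \<Sum>j<n. x i * p i j * x j)" for x
    unfolding p_def using insert.prems by (intro quadratic_form_sum_rank_one_nonneg) auto
  have IH: "1 \<le> det (1\<^sub>m n + mat n n (\<lambda>(i, j). p i j))"
      "det (1\<^sub>m n + mat n n (\<lambda>(i, j). p i j)) \<le> (\<Prod>m\<in>F. 1 + c m * (\<Sum>i<n. (g m i)\<^sup>2))"
    using insert.IH insert.prems unfolding p_def by auto
  have ca: "0 \<le> c a" using insert.prems by simp
  note update = det_one_plus_rank_one_update_bounds[OF psd ca, of "g a"]
  have "0 \<le> 1 + c a * (\<Sum>i<n. (g a i)\<^sup>2)" using ca by (simp add: sum_nonneg)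
  with IH(2) have "det (1\<^sub>m n + mat n n (\<lambda>(i, j). p i j)) * (1 + c a * (\<Sum>i<n. (g a i)\<^sup>2))
      \<le> (\<Prod>m\<in>F. 1 + c m * (\<Sum>i<n. (g m i)\<^sup>2)) * (1 + c a * (\<Sum>i<n. (g a i)\<^sup>2))"
    by (rule mult_right_mono)
  also have "\<dots> = (\<Prod>m\<in>insert a F. 1 + c m * (\<Sum>i<n. (g m i)\<^sup>2))"
    unfolding prod.insert[OF insert.hyps] by (rule mult.commute)
  finally have "det (1\<^sub>m n + mat n n (\<lambda>(i, j). p i j)) * (1 + c a * (\<Sum>i<n. (g a i)\<^sup>2))
      \<le> (\<Prod>m\<in>insert a F. 1 + c m * (\<Sum>i<n. (g m i)\<^sup>2))" .
  then show ?case
    unfolding det_insert using update IH(1) by linarith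
qed

lemma tendsto_det:
  fixes A :: "nat \<Rightarrow> nat \<Rightarrow> nat \<Rightarrow> real"
  assumes "\<And>i j. i < n \<Longrightarrow> j < n \<Longrightarrow> (\<lambda>N. A N i j) \<longlonglongrightarrow> G i j"
  shows "(\<lambda>N. det (mat n n (\<lambda>(i, j). A N i j))) \<longlonglongrightarrow> det (mat n n (\<lambda>(i, j). G i j))"
proof -
  have leibniz: "det (mat n n (\<lambda>(i, j). F i j))
      = (\<Sum>p\<in>{p. p permutes {0..<n}}. signof p * (\<Prod>i=0..<n. F i (p i)))"
    for F :: "nat \<Rightarrow> nat \<Rightarrow> real"
  proof -
    have "p i < n" if "p permutes {0..<n}" "i < n" for p i
      using that by (auto dest: permutes_in_image)
    then show ?thesis
      by (subst det_def'[of _ n]) (auto intro!: sum.cong prod.cong)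
  qed
  show ?thesis unfolding leibniz
  proof (intro tendsto_intros)
    fix p i assume "p \<in> {p. p permutes {0..<n}}" and "i \<in> {0..<n}"
    then show "(\<lambda>N. A N i (p i)) \<longlonglongrightarrow> G i (p i)"
      using assms by (auto dest: permutes_in_image)
  qed
qed

lemma has_sum_term_le:
  fixes f :: "'b \<Rightarrow> real"
  assumes "(f has_sum S) A" and "\<And>m. m \<in> A \<Longrightarrow> 0 \<le> f m" and "x \<in> A"
  shows "f x \<le> S"
  using has_sum_mono_neutral[OF has_sum_finite[of "{x}" f] assms(1)] assms(2,3) by auto

lemma has_sum_atLeast_1_imp_LIMSEQ:
  fixes f :: "nat \<Rightarrow> real"
  assumes "(f has_sum S) {1..}"
  shows "(\<lambda>N. \<Sum>m=1..N. f m) \<longlonglongrightarrow> S"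
proof -
  define h where "h m = (if 1 \<le> m then f m else 0)" for m
  have "(h has_sum S) UNIV"
    using assms by (subst has_sum_cong_neutral[where f = h and T = "{1..}"]) (auto simp: h_def)
  then have "h sums S" by (rule has_sum_imp_sums)
  then have "(\<lambda>N. \<Sum>m\<le>N. h m) \<longlonglongrightarrow> S" by (simp add: sums_def_le)
  moreover have "(\<Sum>m\<le>N. h m) = (\<Sum>m=1..N. f m)" for N
    by (rule sum.mono_neutral_cong_right) (auto simp: h_def)
  ultimately show ?thesis by simp
qed

lemma tendsto_det_one_plus_truncated_mercer:
  fixes zs :: "'a list" and k :: "'a \<Rightarrow> 'a \<Rightarrow> real"
    and \<sigma> :: "nat \<Rightarrow> real" and \<phi> :: "nat \<Rightarrow> 'a \<Rightarrow> real"
  assumes zs: "set zs \<subseteq> Z"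
    and mercer: "\<And>z z'. z \<in> Z \<Longrightarrow> z' \<in> Z
      \<Longrightarrow> ((\<lambda>m. \<sigma> m * \<phi> m z * \<phi> m z') has_sum k z z') {1..}"
  defines "n \<equiv> length zs"
  shows "(\<lambda>N. det (1\<^sub>m n + mat n n (\<lambda>(i, j).
      \<Sum>m\<in>{1..N}. \<sigma> m / lam\<^sup>2 * \<phi> m (zs ! i) * \<phi> m (zs ! j))))
    \<longlonglongrightarrow> det (1\<^sub>m n + (1 / lam\<^sup>2) \<cdot>\<^sub>m gram_mat k zs)"
proof -
  define A where "A N i j = (if i = j then 1 else 0)
    + (\<Sum>m\<in>{1..N}. \<sigma> m / lam\<^sup>2 * \<phi> m (zs ! i) * \<phi> m (zs ! j))" for N i j
  define G where "G i j = (if i = j then 1 else 0) + k (zs ! i) (zs ! j) / lam\<^sup>2" for i j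
  have "(\<lambda>N. A N i j) \<longlonglongrightarrow> G i j" if "i < n" "j < n" for i j
  proof -
    have "zs ! i \<in> Z" "zs ! j \<in> Z" using zs that unfolding n_def by auto
    then have "(\<lambda>N. (\<Sum>m=1..N. \<sigma> m * \<phi> m (zs ! i) * \<phi> m (zs ! j)) * (1 / lam\<^sup>2))
        \<longlonglongrightarrow> k (zs ! i) (zs ! j) * (1 / lam\<^sup>2)"
      by (intro tendsto_mult_right has_sum_atLeast_1_imp_LIMSEQ mercer)
    then show ?thesis
      unfolding A_def G_def sum_distrib_right by (intro tendsto_add tendsto_const) simp
  qed
  then have "(\<lambda>N. det (mat n n (\<lambda>(i, j). A N i j))) \<longlonglongrightarrow> det (mat n n (\<lambda>(i, j). G i j))"
    by (rule tendsto_det)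
  moreover have "mat n n (\<lambda>(i, j). A N i j) = 1\<^sub>m n + mat n n (\<lambda>(i, j).
      \<Sum>m\<in>{1..N}. \<sigma> m / lam\<^sup>2 * \<phi> m (zs ! i) * \<phi> m (zs ! j))" for N
    unfolding A_def by (intro eq_matI) auto
  moreover have "mat n n (\<lambda>(i, j). G i j) = 1\<^sub>m n + (1 / lam\<^sup>2) \<cdot>\<^sub>m gram_mat k zs"
    unfolding G_def gram_mat_def n_def by (intro eq_matI) auto
  ultimately show ?thesis by simp
qed

lemma ln_det_gram_le_of_mercer:
  fixes zs :: "'a list" and k :: "'a \<Rightarrow> 'a \<Rightarrow> real"
    and \<sigma> :: "nat \<Rightarrow> real" and \<phi> :: "nat \<Rightarrow> 'a \<Rightarrow> real"
  assumes zs: "set zs \<subseteq> Z" and \<sigma>: "\<And>m. 1 \<le> m \<Longrightarrow> 0 \<le> \<sigma> m"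
    and mercer: "\<And>z z'. z \<in> Z \<Longrightarrow> z' \<in> Z
      \<Longrightarrow> ((\<lambda>m. \<sigma> m * \<phi> m z * \<phi> m z') has_sum k z z') {1..}"
    and partial: "\<And>N. (\<Sum>m=1..N. ln (1 + \<sigma> m / lam\<^sup>2 * (\<Sum>i<length zs. (\<phi> m (zs ! i))\<^sup>2))) \<le> R"
  shows "ln (det (1\<^sub>m (length zs) + (1 / lam\<^sup>2) \<cdot>\<^sub>m gram_mat k zs)) \<le> R"
proof -
  define n where "n = length zs"
  define c where "c m = \<sigma> m / lam\<^sup>2" for m
  define g where "g m i = \<phi> m (zs ! i)" for m i
  define A where "A N = 1\<^sub>m n + mat n n (\<lambda>(i, j). \<Sum>m\<in>{1..N}. c m * g m i * g m j)" for N
  define G where "G = 1\<^sub>m n + (1 / lam\<^sup>2) \<cdot>\<^sub>m gram_mat k zs"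
  have c: "0 \<le> c m" if "m \<in> {1..N}" for m N using \<sigma> that unfolding c_def by simp
  have bounds: "1 \<le> det (A N) \<and> det (A N) \<le> exp R" for N
  proof -
    have "1 \<le> det (A N) \<and> det (A N) \<le> (\<Prod>m\<in>{1..N}. 1 + c m * (\<Sum>i<n. (g m i)\<^sup>2))"
      unfolding A_def by (rule det_one_plus_sum_rank_one_bounds) (use c in auto)
    moreover have "(\<Prod>m\<in>{1..N}. 1 + c m * (\<Sum>i<n. (g m i)\<^sup>2))
        = exp (\<Sum>m=1..N. ln (1 + c m * (\<Sum>i<n. (g m i)\<^sup>2)))"
      using c by (subst exp_sum) (auto intro!: prod.cong simp: sum_nonneg add_pos_nonneg)
    moreover have "\<dots> \<le> exp R" using partial unfolding c_def g_def n_def by simp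
    ultimately show ?thesis by linarith
  qed
  have "(\<lambda>N. det (A N)) \<longlonglongrightarrow> det G"
    unfolding A_def G_def c_def g_def n_def using zs mercer by (rule tendsto_det_one_plus_truncated_mercer)
  then have "1 \<le> det G \<and> det G \<le> exp R"
    using bounds by (auto intro: LIMSEQ_le_const LIMSEQ_le_const2)
  then have "ln (det G) \<le> ln (exp R)" by (subst ln_le_cancel_iff) auto
  then show ?thesis unfolding G_def n_def by simp
qed

lemma powr_neg_le_diff_powr:
  fixes x s :: real
  assumes x: "0 < x" and s: "1 \<le> s"
  shows "(s - 1) * (x + 1) powr (- s) \<le> x powr (1 - s) - (x + 1) powr (1 - s)"
proof -
  have "\<exists>z. x < z \<and> z < x + 1 \<and>
      (x + 1) powr (1 - s) - x powr (1 - s) = (x + 1 - x) * ((1 - s) * z powr (1 - s - 1))"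
  proof (rule MVT2)
    fix y assume "x \<le> y"
    then show "((\<lambda>y. y powr (1 - s)) has_real_derivative (1 - s) * y powr (1 - s - 1)) (at y)"
      using x by (intro has_real_derivative_powr) auto
  qed simp
  then obtain z where z: "x < z" "z < x + 1"
    and mvt: "(x + 1) powr (1 - s) - x powr (1 - s) = (1 - s) * z powr (- s)"
    by auto
  have "(s - 1) * (x + 1) powr (- s) \<le> (s - 1) * z powr (- s)"
    using z x s by (intro mult_left_mono powr_mono2') auto
  also have "\<dots> = x powr (1 - s) - (x + 1) powr (1 - s)" using mvt by (simp add: algebra_simps)
  finally show ?thesis .
qed

lemma sum_powr_neg_tail_le:
  fixes s :: real
  assumes s: "1 < s" and D: "1 \<le> D"
  shows "(\<Sum>m\<in>{D<..n}. real m powr (- s)) \<le> real D powr (1 - s) / (s - 1)"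
proof (cases "D \<le> n")
  case True
  have "(s - 1) * (\<Sum>m\<in>{D<..n}. real m powr (- s)) \<le> real D powr (1 - s) - real n powr (1 - s)"
    using True
  proof (induction n rule: dec_induct)
    case (step n)
    have "{D<..Suc n} = insert (Suc n) {D<..n}" using step.hyps by auto
    then have "(s - 1) * (\<Sum>m\<in>{D<..Suc n}. real m powr (- s))
        = (s - 1) * (\<Sum>m\<in>{D<..n}. real m powr (- s)) + (s - 1) * (real n + 1) powr (- s)"
      by (simp add: algebra_simps)
    also have "\<dots> \<le> (real D powr (1 - s) - real n powr (1 - s))
        + (real n powr (1 - s) - (real n + 1) powr (1 - s))"
      using step.IH powr_neg_le_diff_powr[of "real n" s] s step.hyps D by (intro add_mono) auto
    finally show ?case by (simp add: add.commute)
  qed simp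
  moreover have "0 \<le> real n powr (1 - s)" by simp
  ultimately have "(s - 1) * (\<Sum>m\<in>{D<..n}. real m powr (- s)) \<le> real D powr (1 - s)" by linarith
  then show ?thesis using s by (simp add: field_simps)
qed (use s in simp)

lemma sum_powr_neg_greaterThan_le:
  fixes s :: real
  assumes s: "1 < s"
  shows "(\<Sum>m\<in>{D<..n}. real m powr (- s)) \<le> s / (s - 1) * (real D + 1) powr (1 - s)"
proof (cases "D < n")
  case True
  then have "{D<..n} = insert (Suc D) {Suc D<..n}" by auto
  then have "(\<Sum>m\<in>{D<..n}. real m powr (- s))
      = (real D + 1) powr (- s) + (\<Sum>m\<in>{Suc D<..n}. real m powr (- s))"
    by (simp add: add.commute)
  also have "\<dots> \<le> (real D + 1) powr (1 - s) + (real D + 1) powr (1 - s) / (s - 1)"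
    using sum_powr_neg_tail_le[OF s, of "Suc D" n] s by (intro add_mono powr_mono) (auto simp: add.commute)
  also have "\<dots> = s / (s - 1) * (real D + 1) powr (1 - s)"
    using s by (simp add: field_simps)
  finally show ?thesis .
qed (use s in simp)

lemma powr_mult_powr_one_minus_le:
  fixes x y s :: real
  assumes x: "0 \<le> x" and xy: "x \<le> y" and s: "1 \<le> s"
  shows "x powr s * y powr (1 - s) \<le> x"
proof -
  have "x powr s = x * x powr (s - 1)"
    using x powr_add[of x 1 "s - 1"] by simp
  also have "x * x powr (s - 1) * y powr (1 - s) \<le> x * y powr (s - 1) * y powr (1 - s)"
    using x xy s by (intro mult_right_mono mult_left_mono powr_mono2) auto
  finally show ?thesis
    using x xy by (cases "y = 0") (auto simp: mult.assoc powr_add[symmetric])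
qed

lemma sum_ln_one_plus_le_split:
  fixes a :: "nat \<Rightarrow> real" and s A B :: real
  assumes s: "1 < s" and a0: "\<And>m. 1 \<le> m \<Longrightarrow> 0 \<le> a m"
    and aA: "\<And>m. 1 \<le> m \<Longrightarrow> a m \<le> A"
    and aB: "\<And>m. 1 \<le> m \<Longrightarrow> a m \<le> B * real m powr (- s)" and B: "0 \<le> B"
  shows "(\<Sum>m=1..N. ln (1 + a m))
    \<le> real D * ln (1 + A) + s / (s - 1) * (B * (real D + 1) powr (1 - s))"
proof -
  have "(\<Sum>m=1..N. ln (1 + a m))
      = (\<Sum>m\<in>{1..N} \<inter> {..D}. ln (1 + a m)) + (\<Sum>m\<in>{D<..N}. ln (1 + a m))"
    by (subst sum.union_disjoint[symmetric]) (auto intro: sum.cong)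
  also have "(\<Sum>m\<in>{1..N} \<inter> {..D}. ln (1 + a m)) \<le> real D * ln (1 + A)"
  proof -
    have "(\<Sum>m\<in>{1..N} \<inter> {..D}. ln (1 + a m)) \<le> (\<Sum>m\<in>{1..N} \<inter> {..D}. ln (1 + A))"
    proof (rule sum_mono)
      fix m assume "m \<in> {1..N} \<inter> {..D}"
      then have "0 \<le> a m" "a m \<le> A" using a0 aA by auto
      then show "ln (1 + a m) \<le> ln (1 + A)" by simp
    qed
    also have "\<dots> = real (card ({1..N} \<inter> {..D})) * ln (1 + A)" by simp
    also have "\<dots> \<le> real D * ln (1 + A)"
    proof (rule mult_right_mono)
      show "real (card ({1..N} \<inter> {..D})) \<le> real D"
        using card_mono[of "{1..D}" "{1..N} \<inter> {..D}"] by auto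
      show "0 \<le> ln (1 + A)" using a0[of 1] aA[of 1] by simp
    qed
    finally show ?thesis .
  qed
  also have "(\<Sum>m\<in>{D<..N}. ln (1 + a m)) \<le> s / (s - 1) * (B * (real D + 1) powr (1 - s))"
  proof -
    have "(\<Sum>m\<in>{D<..N}. ln (1 + a m)) \<le> (\<Sum>m\<in>{D<..N}. B * real m powr (- s))"
      using a0 aB by (intro sum_mono order_trans[OF ln_add_one_self_le_self]) auto
    also have "\<dots> \<le> B * (s / (s - 1) * (real D + 1) powr (1 - s))"
      unfolding sum_distrib_left[symmetric] using sum_powr_neg_greaterThan_le[OF s] B
      by (rule mult_left_mono)
    finally show ?thesis by (simp add: mult_ac)
  qed
  finally show ?thesis by simp
qed

(* The cut-off D = floor ((B / L) powr (1 / s)) balances D L against B D powr (1 - s). *)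
lemma sum_ln_one_plus_le:
  fixes a :: "nat \<Rightarrow> real" and s A B K L :: real
  assumes s: "1 < s" and a0: "\<And>m. 1 \<le> m \<Longrightarrow> 0 \<le> a m"
    and aA: "\<And>m. 1 \<le> m \<Longrightarrow> a m \<le> A"
    and aB: "\<And>m. 1 \<le> m \<Longrightarrow> a m \<le> B * real m powr (- s)"
    and B: "0 \<le> B" and L: "0 < L" and K: "ln (1 + A) \<le> K * L"
  shows "(\<Sum>m=1..N. ln (1 + a m)) \<le> (K + s / (s - 1)) * B powr (1 / s) * L powr (1 - 1 / s)"
proof -
  define x where "x = (B / L) powr (1 / s)"
  define D where "D = nat \<lfloor>x\<rfloor>"
  have x0: "0 \<le> x" unfolding x_def by simp
  have Dx: "real D \<le> x" and xD: "x \<le> real D + 1"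
    unfolding D_def using x0 by linarith+
  have "0 \<le> ln (1 + A)" using a0[of 1] aA[of 1] by simp
  then have "real D * ln (1 + A) \<le> x * (K * L)"
    using Dx K x0 by (intro mult_mono) auto
  moreover have "B * (real D + 1) powr (1 - s) \<le> L * x"
  proof -
    have "B = L * x powr s"
      unfolding x_def using B L s by (simp add: powr_powr)
    then show ?thesis
      using powr_mult_powr_one_minus_le[OF x0 xD] s L by (simp add: mult.assoc)
  qed
  then have "s / (s - 1) * (B * (real D + 1) powr (1 - s)) \<le> s / (s - 1) * (L * x)"
    using s by (intro mult_left_mono) auto
  ultimately have "(\<Sum>m=1..N. ln (1 + a m)) \<le> (K + s / (s - 1)) * (L * x)"
    using sum_ln_one_plus_le_split[OF s a0 aA aB B, of N D] by (simp add: algebra_simps)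
  also have "L * x = B powr (1 / s) * L powr (1 - 1 / s)"
    unfolding x_def using B L by (simp add: powr_divide powr_diff)
  finally show ?thesis by (simp add: mult.assoc)
qed

lemma mercer_term_le_diag:
  fixes \<sigma> :: "nat \<Rightarrow> real" and \<phi> :: "nat \<Rightarrow> 'a \<Rightarrow> real"
  assumes "((\<lambda>m. \<sigma> m * \<phi> m z * \<phi> m z) has_sum k z z) {1..}"
    and "\<And>m. 1 \<le> m \<Longrightarrow> 0 \<le> \<sigma> m" and "1 \<le> m"
  shows "\<sigma> m * (\<phi> m z)\<^sup>2 \<le> k z z"
  using has_sum_term_le[OF assms(1)] assms(2,3) by (simp add: power2_eq_square mult.assoc)

lemma eigenpair_product_decay:
  fixes m :: nat and p \<eta> c C\<phi> \<sigma>\<^sub>m \<phi>\<^sub>m :: real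
  assumes m: "1 \<le> m" and \<sigma>0: "0 \<le> \<sigma>\<^sub>m" and \<sigma>: "\<sigma>\<^sub>m \<le> c * real m powr (- p)"
    and \<phi>: "\<bar>real m powr (- p * \<eta>) * \<phi>\<^sub>m\<bar> \<le> C\<phi>"
  shows "\<sigma>\<^sub>m * \<phi>\<^sub>m\<^sup>2 \<le> c * C\<phi>\<^sup>2 * real m powr (- (p * (1 - 2 * \<eta>)))"
proof -
  define y where "y = real m powr (- p * \<eta>) * \<phi>\<^sub>m"
  have m_pos: "0 < real m" using m by simp
  have "\<phi>\<^sub>m = real m powr (p * \<eta>) * y"
    unfolding y_def using m_pos by (simp add: powr_minus field_simps)
  then have \<phi>_sq: "\<phi>\<^sub>m\<^sup>2 = real m powr (2 * p * \<eta>) * y\<^sup>2"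
    using m_pos by (simp add: power2_eq_square powr_add[symmetric] mult_ac)
  have "\<bar>y\<bar>\<^sup>2 \<le> C\<phi>\<^sup>2"
    using \<phi> unfolding y_def by (intro power_mono) auto
  then have "\<sigma>\<^sub>m * \<phi>\<^sub>m\<^sup>2 \<le> (c * real m powr (- p)) * (real m powr (2 * p * \<eta>) * C\<phi>\<^sup>2)"
    unfolding \<phi>_sq using \<sigma> \<sigma>0 by (intro mult_mono mult_left_mono) auto
  also have "\<dots> = c * C\<phi>\<^sup>2 * (real m powr (- p) * real m powr (2 * p * \<eta>))"
    by simp
  also have "real m powr (- p) * real m powr (2 * p * \<eta>) = real m powr (- (p * (1 - 2 * \<eta>)))"
    by (simp add: powr_add[symmetric] algebra_simps)
  finally show ?thesis .
qed

lemma ln_det_gram_le: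
  fixes zs :: "'a list" and k :: "'a \<Rightarrow> 'a \<Rightarrow> real"
    and \<sigma> :: "nat \<Rightarrow> real" and \<phi> :: "nat \<Rightarrow> 'a \<Rightarrow> real" and lam s B K L :: real
  assumes zs: "set zs \<subseteq> Z" and \<sigma>: "\<And>m. 1 \<le> m \<Longrightarrow> 0 \<le> \<sigma> m"
    and mercer: "\<And>z z'. z \<in> Z \<Longrightarrow> z' \<in> Z
      \<Longrightarrow> ((\<lambda>m. \<sigma> m * \<phi> m z * \<phi> m z') has_sum k z z') {1..}"
    and diag: "\<And>z. z \<in> Z \<Longrightarrow> k z z \<le> 1"
    and decay: "\<And>m z. 1 \<le> m \<Longrightarrow> z \<in> Z \<Longrightarrow> \<sigma> m * (\<phi> m z)\<^sup>2 \<le> B * real m powr (- s)"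
    and s: "1 < s" and B: "0 \<le> B" and L: "0 < L"
    and K: "ln (1 + real (length zs) / lam\<^sup>2) \<le> K * L"
  shows "ln (det (1\<^sub>m (length zs) + (1 / lam\<^sup>2) \<cdot>\<^sub>m gram_mat k zs))
    \<le> (K + s / (s - 1)) * (B * real (length zs) / lam\<^sup>2) powr (1 / s) * L powr (1 - 1 / s)"
proof (rule ln_det_gram_le_of_mercer[OF zs \<sigma> mercer])
  fix N
  define n where "n = length zs"
  define a where "a m = \<sigma> m / lam\<^sup>2 * (\<Sum>i<n. (\<phi> m (zs ! i))\<^sup>2)" for m
  have zs_i: "zs ! i \<in> Z" if "i < n" for i using zs that unfolding n_def by auto
  have a_eq: "a m = (\<Sum>i<n. \<sigma> m * (\<phi> m (zs ! i))\<^sup>2) / lam\<^sup>2" for m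
    unfolding a_def by (simp add: sum_distrib_left sum_divide_distrib)
  have "(\<Sum>m=1..N. ln (1 + a m))
      \<le> (K + s / (s - 1)) * (B * real n / lam\<^sup>2) powr (1 / s) * L powr (1 - 1 / s)"
  proof (rule sum_ln_one_plus_le[OF s])
    fix m :: nat assume m: "1 \<le> m"
    show "0 \<le> a m" unfolding a_def using \<sigma>[OF m] by (simp add: sum_nonneg)
    have "\<sigma> m * (\<phi> m z)\<^sup>2 \<le> 1" if "z \<in> Z" for z
    proof -
      have "\<sigma> m * (\<phi> m z)\<^sup>2 \<le> k z z"
        using mercer[OF that that] \<sigma> m by (rule mercer_term_le_diag)
      then show ?thesis using diag[OF that] by linarith
    qed
    then have "(\<Sum>i<n. \<sigma> m * (\<phi> m (zs ! i))\<^sup>2) \<le> (\<Sum>i<n. 1)"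
      using zs_i by (intro sum_mono) auto
    then show "a m \<le> real n / lam\<^sup>2" unfolding a_eq by (simp add: divide_right_mono)
    have "(\<Sum>i<n. \<sigma> m * (\<phi> m (zs ! i))\<^sup>2) \<le> (\<Sum>i<n. B * real m powr (- s))"
      using decay[OF m] zs_i by (intro sum_mono) auto
    then show "a m \<le> B * real n / lam\<^sup>2 * real m powr (- s)"
      unfolding a_eq by (simp add: divide_right_mono mult_ac)
  qed (use B L K in \<open>auto simp: n_def\<close>)
  then show "(\<Sum>m=1..N. ln (1 + \<sigma> m / lam\<^sup>2 * (\<Sum>i<length zs. (\<phi> m (zs ! i))\<^sup>2)))
      \<le> (K + s / (s - 1)) * (B * real (length zs) / lam\<^sup>2) powr (1 / s) * L powr (1 - 1 / s)"
    unfolding a_def n_def .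
qed

lemma ln_one_plus_le_mult_ln:
  fixes T lam :: real
  assumes T: "exp 1 \<le> T"
  shows "ln (1 + T / lam\<^sup>2) \<le> (1 + ln (1 + 1 / lam\<^sup>2)) * ln T"
proof -
  have T1: "1 \<le> T" using T exp_ge_add_one_self[of 1] by linarith
  then have lnT: "1 \<le> ln T" using T by (simp add: ln_ge_iff)
  have pos: "0 < 1 + 1 / lam\<^sup>2" by (intro add_pos_nonneg) auto
  have "0 \<le> T / lam\<^sup>2" using T1 by simp
  then have pos_T: "0 < 1 + T / lam\<^sup>2" by linarith
  have "1 + T / lam\<^sup>2 \<le> T * (1 + 1 / lam\<^sup>2)" using T1 by (simp add: distrib_left)
  then have "ln (1 + T / lam\<^sup>2) \<le> ln (T * (1 + 1 / lam\<^sup>2))"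
    using pos_T by (subst ln_le_cancel_iff) auto
  also have "\<dots> = ln T + ln (1 + 1 / lam\<^sup>2)"
    using T1 pos by (subst ln_mult) auto
  also have "\<dots> \<le> ln T + ln (1 + 1 / lam\<^sup>2) * ln T"
    using mult_left_mono[OF lnT, of "ln (1 + 1 / lam\<^sup>2)"] pos by simp
  finally show ?thesis by (simp add: algebra_simps)
qed

lemma infinite_hypercube:
  fixes a :: "'a::euclidean_space"
  assumes "0 < \<rho>"
  shows "infinite (hypercube a \<rho>)"
proof
  assume "finite (hypercube a \<rho>)"
  then have "interior (hypercube a \<rho>) = {}" by (rule empty_interior_finite)
  moreover have "box a (a + \<rho> *\<^sub>R One) \<noteq> {}"
    using assms by (subst box_ne_empty) (auto simp: inner_add_left)
  ultimately show False unfolding hypercube_def by simp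
qed

lemma max_info_gain_le:
  assumes "infinite Z"
    and "\<And>zs. set zs \<subseteq> Z \<Longrightarrow> distinct zs \<Longrightarrow> length zs = T
      \<Longrightarrow> ln (det (1\<^sub>m T + (1 / lam\<^sup>2) \<cdot>\<^sub>m gram_mat k zs)) \<le> R"
  shows "max_info_gain Z k lam T \<le> R / 2"
proof -
  obtain F where F: "F \<subseteq> Z" "finite F" "card F = T"
    using infinite_arbitrarily_large[OF assms(1)] by blast
  obtain zs where "set zs = F" "distinct zs"
    using finite_distinct_list[OF F(2)] by blast
  then have "{zs. set zs \<subseteq> Z \<and> distinct zs \<and> length zs = T} \<noteq> {}"
    using F distinct_card by fastforce
  then show ?thesis
    unfolding max_info_gain_def using assms(2) by (intro cSUP_least) (auto intro: divide_right_mono)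
qed

lemma max_info_gain_le_of_eigendecay:
  fixes Z :: "'a::euclidean_space set" and k :: "'a \<Rightarrow> 'a \<Rightarrow> real"
    and \<sigma> :: "nat \<Rightarrow> real" and \<phi> :: "nat \<Rightarrow> 'a \<Rightarrow> real" and lam s B :: real and T :: nat
  assumes Z: "infinite Z" and mercer: "mercer_pairs Z k \<sigma> \<phi>"
    and diag: "\<And>z. z \<in> Z \<Longrightarrow> k z z \<le> 1"
    and decay: "\<And>m z. 1 \<le> m \<Longrightarrow> z \<in> Z \<Longrightarrow> \<sigma> m * (\<phi> m z)\<^sup>2 \<le> B * real m powr (- s)"
    and s: "1 < s" and B: "0 \<le> B" and T: "exp 1 \<le> real T"
  shows "max_info_gain Z k lam T
    \<le> (1 + ln (1 + 1 / lam\<^sup>2) + s / (s - 1)) * (B * real T / lam\<^sup>2) powr (1 / s)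
      * ln (real T) powr (1 - 1 / s) / 2"
proof (rule max_info_gain_le[OF Z])
  have \<sigma>: "\<And>m. 1 \<le> m \<Longrightarrow> 0 \<le> \<sigma> m"
    and mercer_sum: "\<And>z z'. z \<in> Z \<Longrightarrow> z' \<in> Z
      \<Longrightarrow> ((\<lambda>m. \<sigma> m * \<phi> m z * \<phi> m z') has_sum k z z') {1..}"
    using mercer unfolding mercer_pairs_def by auto
  have "0 < real T" using T exp_gt_zero[of 1] by linarith
  then have "1 \<le> ln (real T)" using T ln_ge_iff by blast
  then have lnT: "0 < ln (real T)" by linarith
  fix zs assume zs: "set zs \<subseteq> Z" and len: "length zs = T"
  show "ln (det (1\<^sub>m T + (1 / lam\<^sup>2) \<cdot>\<^sub>m gram_mat k zs))
      \<le> (1 + ln (1 + 1 / lam\<^sup>2) + s / (s - 1)) * (B * real T / lam\<^sup>2) powr (1 / s)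
        * ln (real T) powr (1 - 1 / s)"
    using ln_det_gram_le[OF zs \<sigma> mercer_sum diag decay s B lnT] ln_one_plus_le_mult_ln[OF T] len
    by simp
qed

theorem lemma2:
  fixes Cp \<alpha> p \<eta> C\<phi> lam :: real
  assumes "Cp > 0" and "\<alpha> > 0" and "p > 1" and "\<eta> \<ge> 0" and "lam > 0"
    and "p * (1 - 2 * \<eta>) > 1"
  shows "\<exists>C T0. \<forall>(a::'a::euclidean_space) \<rho> k \<sigma> \<phi>.
      \<rho> > 0 \<longrightarrow>
      pd_kernel_on (hypercube a \<rho>) k \<longrightarrow>
      continuous_on (hypercube a \<rho> \<times> hypercube a \<rho>) (\<lambda>(z, z'). k z z') \<longrightarrow>
      (\<forall>z\<in>hypercube a \<rho>. k z z \<le> 1) \<longrightarrow>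
      mercer_pairs (hypercube a \<rho>) k \<sigma> \<phi> \<longrightarrow>
      (\<forall>m\<ge>1. \<sigma> m \<le> Cp * real m powr (- p) * \<rho> powr \<alpha>) \<longrightarrow>
      (\<forall>m\<ge>1. \<forall>z\<in>hypercube a \<rho>. \<bar>real m powr (- p * \<eta>) * \<phi> m z\<bar> \<le> C\<phi>) \<longrightarrow>
      (\<forall>T::nat. T \<ge> T0 \<longrightarrow>
         max_info_gain (hypercube a \<rho>) k lam T
           \<le> C * real T powr (1 / (p * (1 - 2 * \<eta>)))
               * ln (real T) powr (1 - 1 / (p * (1 - 2 * \<eta>)))
               * \<rho> powr (\<alpha> / (p * (1 - 2 * \<eta>))))"
proof -
  define s where "s = p * (1 - 2 * \<eta>)"
  define C where
    "C = (1 + ln (1 + 1 / lam\<^sup>2) + s / (s - 1)) * (Cp * C\<phi>\<^sup>2 / lam\<^sup>2) powr (1 / s) / 2"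
  have s: "1 < s" using assms(6) unfolding s_def .
  (* Positive definiteness and continuity of k only serve to produce the Mercer expansion,
     which mercer_pairs already provides. *)
  show ?thesis unfolding s_def[symmetric]
  proof (intro exI[of _ C] exI[of _ "3::nat"] allI impI)
    fix a :: 'a and \<rho> k \<sigma> \<phi> and T :: nat
    assume \<rho>: "\<rho> > 0" and diag: "\<forall>z\<in>hypercube a \<rho>. k z z \<le> 1"
      and mercer: "mercer_pairs (hypercube a \<rho>) k \<sigma> \<phi>"
      and \<sigma>_decay: "\<forall>m\<ge>1. \<sigma> m \<le> Cp * real m powr (- p) * \<rho> powr \<alpha>"
      and \<phi>_growth: "\<forall>m\<ge>1. \<forall>z\<in>hypercube a \<rho>. \<bar>real m powr (- p * \<eta>) * \<phi> m z\<bar> \<le> C\<phi>"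
      and T: "3 \<le> T"
    define B where "B = Cp * C\<phi>\<^sup>2 * \<rho> powr \<alpha>"
    have B: "0 \<le> B" unfolding B_def using assms(1) by simp
    have decay: "\<sigma> m * (\<phi> m z)\<^sup>2 \<le> B * real m powr (- s)"
      if "1 \<le> m" "z \<in> hypercube a \<rho>" for m z
      using eigenpair_product_decay[of m "\<sigma> m" "Cp * \<rho> powr \<alpha>" p \<eta> "\<phi> m z" C\<phi>] that
        mercer \<sigma>_decay \<phi>_growth unfolding mercer_pairs_def B_def s_def by (simp add: mult_ac)
    have "exp 1 \<le> real T" using exp_le T by linarith
    note bound = max_info_gain_le_of_eigendecay[where lam = lam,
        OF infinite_hypercube[OF \<rho>] mercer _ decay s B this]
    define c where "c = Cp * C\<phi>\<^sup>2 / lam\<^sup>2"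
    have "0 \<le> c" unfolding c_def using assms(1) by simp
    moreover have "B * real T / lam\<^sup>2 = c * real T * \<rho> powr \<alpha>"
      unfolding B_def c_def by simp
    ultimately have powr_eq: "(B * real T / lam\<^sup>2) powr (1 / s)
        = c powr (1 / s) * real T powr (1 / s) * \<rho> powr (\<alpha> / s)"
      by (simp add: powr_mult powr_powr)
    show "max_info_gain (hypercube a \<rho>) k lam T
        \<le> C * real T powr (1 / s) * ln (real T) powr (1 - 1 / s) * \<rho> powr (\<alpha> / s)"
      using bound[unfolded powr_eq] diag unfolding C_def c_def[symmetric] by (simp add: mult_ac)
  qed
qed

end
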